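(* Let $F$ be a field without maximal subrings and $D$ a non-commutative division ring with center $F$. If $R$ is a maximal subring of $D$, then $F\subseteq R$.
   Context: All rings are associative unital and subrings share the identity. A maximal subring of a ring $T$ is a proper subring maximal under inclusion among proper subrings of $T$. *)

theory Defs
  imports Main
begin

definition is_subring :: "'a::ring_1 set \<Rightarrow> 'a set \<Rightarrow> bool" where
  "is_subring S T \<longleftrightarrow> S \<subseteq> T \<and> 1 \<in> S \<and>
     (\<forall>x\<in>S. \<forall>y\<in>S. x + y \<in> S \<and> x * y \<in> S) \<and> (\<forall>x\<in>S. - x \<in> S)"

definition maximal_subring :: "'a::ring_1 set \<Rightarrow> 'a set \<Rightarrow> bool" where
  "maximal_subring S T \<longleftrightarrow> is_subring S T \<and> S \<noteq> T \<and>
     (\<forall>U. is_subring U T \<and> S \<subseteq> U \<and> U \<noteq> T \<longrightarrow> U = S)"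

definition ring_center :: "'a::ring_1 set" where
  "ring_center = {x. \<forall>y. x * y = y * x}"

end

(*
  Suppose a central t lies outside R. By maximality R[g] = D for every central g outside R.
  It suffices to find u in F outside R such that F is generated by u over S = R \<inter> F, because
  Zorn's lemma then gives a maximal subring of F.

  If some central u outside R has its inverse in R, every element of D = R[u] has the form
  r u^n, with r central whenever the element is; so F = S[u]. Otherwise every c in F is a sum
  of terms r_i t^i with r_i in R, and these coefficients can be made central (linear
  disjointness). Induct on the length of a relation a c = sum r_i f_i with a in R nonzero and
  f_i central: the top coefficient b is either removed by passing to the relation multiplied
  by b y a - a y b, or b = a g with g central, and then g lies in R, for otherwise g is
  integral over R and the conductor of R[g] = D into R contains the unit a^m. Hence F = S[t].
*)

theory Submission
  imports Defs
begin

lemma subring_subset: "is_subring S T \<Longrightarrow> S \<subseteq> T"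
  and subring_one: "is_subring S T \<Longrightarrow> 1 \<in> S"
  and subring_add: "is_subring S T \<Longrightarrow> x \<in> S \<Longrightarrow> y \<in> S \<Longrightarrow> x + y \<in> S"
  and subring_mult: "is_subring S T \<Longrightarrow> x \<in> S \<Longrightarrow> y \<in> S \<Longrightarrow> x * y \<in> S"
  and subring_uminus: "is_subring S T \<Longrightarrow> x \<in> S \<Longrightarrow> - x \<in> S"
  by (auto simp: is_subring_def)

lemma subring_zero: "is_subring S T \<Longrightarrow> 0 \<in> S"
  by (metis add.right_inverse subring_add subring_one subring_uminus)

lemma subring_diff: "is_subring S T \<Longrightarrow> x \<in> S \<Longrightarrow> y \<in> S \<Longrightarrow> x - y \<in> S"
  by (metis diff_conv_add_uminus subring_add subring_uminus)

lemma subring_power: "is_subring S T \<Longrightarrow> x \<in> S \<Longrightarrow> x ^ n \<in> S"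
  by (induction n) (simp_all add: subring_one subring_mult)

lemma subring_sum: "is_subring S T \<Longrightarrow> (\<And>i. i \<in> A \<Longrightarrow> f i \<in> S) \<Longrightarrow> sum f A \<in> S"
  by (induction A rule: infinite_finite_induct) (simp_all add: subring_zero subring_add)

lemma is_subring_UNIV_iff:
  "is_subring S UNIV \<longleftrightarrow> 1 \<in> S \<and> (\<forall>x\<in>S. \<forall>y\<in>S. x + y \<in> S \<and> x * y \<in> S) \<and> (\<forall>x\<in>S. - x \<in> S)"
  by (simp add: is_subring_def)

lemma is_subring_Int: "is_subring A T \<Longrightarrow> is_subring B T' \<Longrightarrow> is_subring (A \<inter> B) B"
  by (auto simp: is_subring_def)

lemma is_subring_commutant: "is_subring {d. d * x = x * d} UNIV"
  unfolding is_subring_UNIV_iff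
proof (intro conjI ballI)
  fix d e assume d: "d \<in> {d. d * x = x * d}" and e: "e \<in> {d. d * x = x * d}"
  then show "d + e \<in> {d. d * x = x * d}"
    by (simp add: algebra_simps)
  have "d * e * x = d * x * e"
    using e by (simp add: mult.assoc)
  also have "\<dots> = x * (d * e)"
    using d by (simp add: mult.assoc)
  finally show "d * e \<in> {d. d * x = x * d}" by simp
qed auto

lemma ring_center_commute: "x \<in> ring_center \<Longrightarrow> x * y = y * x"
  by (simp add: ring_center_def)

lemma is_subring_ring_center: "is_subring (ring_center :: 'a::ring_1 set) UNIV"
  unfolding is_subring_UNIV_iff
proof (intro conjI ballI)
  fix x y :: 'a assume x: "x \<in> ring_center" and y: "y \<in> ring_center"
  show "x + y \<in> ring_center"
    using x y by (simp add: ring_center_def distrib_left distrib_right)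
  have "x * y * z = z * (x * y)" for z
  proof -
    have "x * y * z = x * (z * y)"
      using ring_center_commute[OF y] by (simp add: mult.assoc)
    also have "\<dots> = z * (x * y)"
      by (simp add: ring_center_commute[OF x, of z] mult.assoc[symmetric])
    finally show ?thesis .
  qed
  then show "x * y \<in> ring_center"
    by (simp add: ring_center_def)
qed (simp_all add: ring_center_def)

lemma inverse_mem_ring_center:
  fixes x :: "'a::division_ring"
  assumes "x \<in> ring_center"
  shows "inverse x \<in> ring_center"
proof (cases "x = 0")
  case False
  have "inverse x * y = y * inverse x" for y
  proof -
    have "inverse x * y = inverse x * (y * x) * inverse x"
      using False by (simp add: mult.assoc)
    also have "\<dots> = inverse x * (x * y) * inverse x"
      by (simp add: ring_center_commute[OF assms])
    also have "\<dots> = y * inverse x"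
      using False by (simp add: mult.assoc[symmetric])
    finally show ?thesis .
  qed
  then show ?thesis by (simp add: ring_center_def)
qed (simp add: subring_zero[OF is_subring_ring_center])

lemma is_subring_Union_chain:
  assumes "C \<noteq> {}" "subset.chain {W. is_subring W T} C"
  shows "is_subring (\<Union>C) T"
  unfolding is_subring_def
proof (intro conjI ballI)
  have sub: "\<And>W. W \<in> C \<Longrightarrow> is_subring W T" and chain: "\<And>X Y. X \<in> C \<Longrightarrow> Y \<in> C \<Longrightarrow> X \<subseteq> Y \<or> Y \<subseteq> X"
    using assms(2) by (auto simp: subset.chain_def)
  show "\<Union>C \<subseteq> T"
    using sub subring_subset by blast
  show "1 \<in> \<Union>C"
    using assms(1) sub subring_one by blast
  show "- x \<in> \<Union>C" if "x \<in> \<Union>C" for x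
    using that sub subring_uminus by blast
  fix x y assume "x \<in> \<Union>C" "y \<in> \<Union>C"
  then obtain W where "W \<in> C" "x \<in> W" "y \<in> W"
    using chain by blast
  then show "x + y \<in> \<Union>C" "x * y \<in> \<Union>C"
    using sub subring_add subring_mult by blast+
qed

text \<open>Zorn's lemma, applied to the subrings containing S and missing t; such a subring is
  maximal outright, since every subring containing S and t is T.\<close>

lemma maximal_subring_exists:
  assumes S: "is_subring S T" and t: "t \<in> T" "t \<notin> S"
    and generates: "\<And>W. is_subring W T \<Longrightarrow> S \<subseteq> W \<Longrightarrow> t \<in> W \<Longrightarrow> W = T"
  shows "\<exists>M. maximal_subring M T"
proof -
  define A where "A = {W. is_subring W T \<and> S \<subseteq> W \<and> t \<notin> W}"
  have "\<exists>M\<in>A. \<forall>X\<in>A. M \<subseteq> X \<longrightarrow> X = M"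
  proof (rule subset_Zorn_nonempty)
    show "A \<noteq> {}"
      using S t(2) unfolding A_def by blast
    fix C assume C: "C \<noteq> {}" "subset.chain A C"
    then have "C \<subseteq> A" "subset.chain {W. is_subring W T} C"
      unfolding A_def subset.chain_def by auto
    then have "is_subring (\<Union>C) T" "S \<subseteq> \<Union>C" "t \<notin> \<Union>C"
      using C(1) is_subring_Union_chain unfolding A_def by blast+
    then show "\<Union>C \<in> A"
      unfolding A_def by blast
  qed
  then obtain M where M: "is_subring M T" "S \<subseteq> M" "t \<notin> M"
    and max: "\<And>X. X \<in> A \<Longrightarrow> M \<subseteq> X \<Longrightarrow> X = M"
    unfolding A_def by auto
  have "maximal_subring M T"
    unfolding maximal_subring_def
  proof (intro conjI allI impI)
    show "is_subring M T" by (fact M(1))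
    show "M \<noteq> T" using M(3) t(1) by blast
    fix U assume U: "is_subring U T \<and> M \<subseteq> U \<and> U \<noteq> T"
    then have "t \<notin> U"
      using generates M(2) by blast
    then show "U = M"
      using U M(2) max unfolding A_def by blast
  qed
  then show ?thesis ..
qed

text \<open>R[g]. Coefficients vanish from n on, so that two representations can be
  padded to a common length.\<close>

definition ring_adjoin :: "'a::ring_1 set \<Rightarrow> 'a \<Rightarrow> 'a set" where
  "ring_adjoin R g =
     {x. \<exists>n r. (\<forall>i. r i \<in> R) \<and> (\<forall>i\<ge>n. r i = 0) \<and> x = (\<Sum>i<n. r i * g ^ i)}"

lemma ring_adjoinI:
  "(\<forall>i. r i \<in> R) \<Longrightarrow> (\<forall>i\<ge>n. r i = 0) \<Longrightarrow> x = (\<Sum>i<n. r i * g ^ i) \<Longrightarrow> x \<in> ring_adjoin R g"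
  unfolding ring_adjoin_def by blast

lemma ring_adjoinE:
  assumes "x \<in> ring_adjoin R g"
  obtains n r where "\<forall>i. r i \<in> R" "\<forall>i\<ge>n. r i = 0" "x = (\<Sum>i<n. r i * g ^ i)"
  using assms unfolding ring_adjoin_def by blast

lemma sum_powers_extend:
  fixes g :: "'a::ring_1"
  shows "(\<forall>i\<ge>n. r i = 0) \<Longrightarrow> n \<le> N \<Longrightarrow> (\<Sum>i<N. r i * g ^ i) = (\<Sum>i<n. r i * g ^ i)"
  by (rule sum.mono_neutral_right) (auto simp: not_less)

context
  fixes R T :: "'a::ring_1 set"
  assumes R: "is_subring R T"
begin

lemma subset_ring_adjoin: "R \<subseteq> ring_adjoin R g"
proof
  fix x assume "x \<in> R"
  then show "x \<in> ring_adjoin R g"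
    by (intro ring_adjoinI[of "\<lambda>i. if i = 0 then x else 0" _ 1]) (simp_all add: subring_zero[OF R])
qed

lemma mem_ring_adjoin_self: "g \<in> ring_adjoin R g"
  by (intro ring_adjoinI[of "\<lambda>i. if i = 1 then 1 else 0" _ 2])
    (simp_all add: subring_zero[OF R] subring_one[OF R] numeral_2_eq_2)

lemma ring_adjoin_add:
  assumes "x \<in> ring_adjoin R g" "y \<in> ring_adjoin R g"
  shows "x + y \<in> ring_adjoin R g"
proof -
  obtain n r where r: "\<forall>i. r i \<in> R" "\<forall>i\<ge>n. r i = 0" "x = (\<Sum>i<n. r i * g ^ i)"
    using assms(1) by (rule ring_adjoinE)
  obtain m q where q: "\<forall>i. q i \<in> R" "\<forall>i\<ge>m. q i = 0" "y = (\<Sum>i<m. q i * g ^ i)"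
    using assms(2) by (rule ring_adjoinE)
  have "x + y = (\<Sum>i<max n m. (r i + q i) * g ^ i)"
    using r q sum_powers_extend[of n r "max n m" g] sum_powers_extend[of m q "max n m" g]
    by (simp add: sum.distrib distrib_right)
  then show ?thesis
    using r q subring_add[OF R] by (intro ring_adjoinI) auto
qed

lemma ring_adjoin_uminus: "x \<in> ring_adjoin R g \<Longrightarrow> - x \<in> ring_adjoin R g"
  by (erule ring_adjoinE, rule ring_adjoinI[of "\<lambda>i. - _ i"])
    (simp_all add: subring_uminus[OF R] sum_negf)

lemma ring_adjoin_sum:
  "(\<And>i. i \<in> A \<Longrightarrow> f i \<in> ring_adjoin R g) \<Longrightarrow> sum f A \<in> ring_adjoin R g"
  using subset_ring_adjoin subring_zero[OF R]
  by (induction A rule: infinite_finite_induct) (auto simp: ring_adjoin_add)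

lemma ring_adjoin_mult_power:
  assumes "x \<in> ring_adjoin R g"
  shows "x * g ^ k \<in> ring_adjoin R g"
proof (induction k)
  case (Suc k)
  obtain n r where r: "\<forall>i. r i \<in> R" "\<forall>i\<ge>n. r i = 0" "x * g ^ k = (\<Sum>i<n. r i * g ^ i)"
    using Suc.IH by (rule ring_adjoinE)
  define r' where "r' i = (if i = 0 then 0 else r (i - 1))" for i
  have "x * g ^ Suc k = x * g ^ k * g"
    by (simp add: power_commutes mult.assoc)
  also have "\<dots> = (\<Sum>i<n. r i * g ^ Suc i)"
    by (simp add: r(3) power_Suc2 mult.assoc sum_distrib_right power_commutes)
  also have "\<dots> = (\<Sum>i<Suc n. r' i * g ^ i)"
    unfolding sum.lessThan_Suc_shift by (simp add: r'_def)
  finally have "x * g ^ Suc k = (\<Sum>i<Suc n. r' i * g ^ i)" .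
  moreover have "\<forall>i. r' i \<in> R" "\<forall>i\<ge>Suc n. r' i = 0"
    using r subring_zero[OF R] by (auto simp: r'_def)
  ultimately show ?case
    by (intro ring_adjoinI)
qed (simp add: assms)

lemma ring_adjoin_mult_coeff:
  assumes "x \<in> ring_adjoin R g" "q \<in> R" "g \<in> ring_center"
  shows "x * q \<in> ring_adjoin R g"
proof -
  obtain n r where r: "\<forall>i. r i \<in> R" "\<forall>i\<ge>n. r i = 0" "x = (\<Sum>i<n. r i * g ^ i)"
    using assms(1) by (rule ring_adjoinE)
  have "g ^ i * q = q * g ^ i" for i
    using ring_center_commute subring_power[OF is_subring_ring_center assms(3)] by blast
  then have "x * q = (\<Sum>i<n. (r i * q) * g ^ i)"
    using r(3) by (simp add: sum_distrib_right mult.assoc)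
  then show ?thesis
    using r assms(2) subring_mult[OF R] by (intro ring_adjoinI) auto
qed

lemma is_subring_ring_adjoin:
  assumes "g \<in> ring_center"
  shows "is_subring (ring_adjoin R g) UNIV"
  unfolding is_subring_UNIV_iff
proof (intro conjI ballI)
  show "1 \<in> ring_adjoin R g"
    using subset_ring_adjoin subring_one[OF R] by blast
  fix x y assume x: "x \<in> ring_adjoin R g" and y: "y \<in> ring_adjoin R g"
  show "x + y \<in> ring_adjoin R g"
    using x y by (rule ring_adjoin_add)
  obtain m q where q: "\<forall>i. q i \<in> R" "y = (\<Sum>i<m. q i * g ^ i)"
    using y by (rule ring_adjoinE)
  have "x * y = (\<Sum>i<m. x * q i * g ^ i)"
    using q(2) by (simp add: sum_distrib_left mult.assoc)
  then show "x * y \<in> ring_adjoin R g"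
    using q(1) x assms
    by (auto intro!: ring_adjoin_sum ring_adjoin_mult_power ring_adjoin_mult_coeff)
qed (rule ring_adjoin_uminus)

end

lemma is_subring_right_multipliers:
  assumes "\<And>b b'. b \<in> Q \<Longrightarrow> b' \<in> Q \<Longrightarrow> b + b' \<in> Q" and "\<And>b. b \<in> Q \<Longrightarrow> - b \<in> Q"
  shows "is_subring {x. \<forall>b\<in>Q. b * x \<in> Q} UNIV"
  using assms unfolding is_subring_UNIV_iff by (simp add: distrib_left mult.assoc[symmetric])

text \<open>For g integral over R, Q is the conductor {b. b R[g] \<subseteq> R}, tested on the spanning
  set 1, g, ..., g^(m-1) of R[g].\<close>

lemma integral_element_multipliers:
  fixes R T :: "'a::ring_1 set"
  assumes R: "is_subring R T" and g: "g \<in> ring_center"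
    and m: "0 < m" and q: "\<forall>j. q j \<in> R" and rel: "g ^ m = (\<Sum>j<m. q j * g ^ j)"
  defines "Q \<equiv> {b \<in> R. \<forall>j<m. b * g ^ j \<in> R}"
  shows "is_subring {x. \<forall>b\<in>Q. b * x \<in> Q} UNIV"
    and "R \<subseteq> {x. \<forall>b\<in>Q. b * x \<in> Q}"
    and "g \<in> {x. \<forall>b\<in>Q. b * x \<in> Q}"
proof -
  show "is_subring {x. \<forall>b\<in>Q. b * x \<in> Q} UNIV"
    by (rule is_subring_right_multipliers)
      (auto simp: Q_def distrib_right subring_add[OF R] subring_uminus[OF R])
  have mult_R: "b * r \<in> Q" if "b \<in> Q" "r \<in> R" for b r
  proof -
    have "b * r * g ^ j = b * g ^ j * r" for j
      using ring_center_commute[OF subring_power[OF is_subring_ring_center g], of j r]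
      by (simp add: mult.assoc)
    then show ?thesis
      using that subring_mult[OF R] by (simp add: Q_def)
  qed
  then show "R \<subseteq> {x. \<forall>b\<in>Q. b * x \<in> Q}" by blast
  have step: "b * g ^ Suc j \<in> R" if b: "b \<in> Q" and j: "j < m" for b j
  proof (cases "Suc j < m")
    case True
    then show ?thesis using b unfolding Q_def by blast
  next
    case False
    then have "Suc j = m"
      using j by simp
    then have "b * g ^ Suc j = b * (\<Sum>i<m. q i * g ^ i)"
      using rel by simp
    also have "\<dots> = (\<Sum>i<m. b * q i * g ^ i)"
      by (simp add: sum_distrib_left mult.assoc)
    also have "\<dots> \<in> R"
      using b q mult_R by (intro subring_sum[OF R]) (simp add: Q_def)
    finally show ?thesis .
  qed
  then show "g \<in> {x. \<forall>b\<in>Q. b * x \<in> Q}"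
    using step[of _ 0] m by (auto simp: Q_def mult.assoc simp flip: power_Suc)
qed

lemma power_mult_central:
  fixes a g :: "'a::ring_1"
  assumes "g \<in> ring_center"
  shows "(a * g) ^ n = a ^ n * g ^ n"
proof (induction n)
  case (Suc n)
  have "(a * g) ^ Suc n = a * (g * a ^ n) * g ^ n"
    by (simp add: Suc mult.assoc)
  also have "\<dots> = a ^ Suc n * g ^ Suc n"
    by (simp add: ring_center_commute[OF assms] mult.assoc)
  finally show ?case .
qed simp

lemma commutator_central_combination:
  fixes a b c y :: "'a::ring_1"
  assumes c: "c \<in> ring_center" and f: "\<forall>i. f i \<in> ring_center"
    and comb: "a * c = (\<Sum>i\<in>I. r i * f i)"
  shows "(b * y * a - a * y * b) * c = (\<Sum>i\<in>I. (b * y * r i - r i * y * b) * f i)"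
proof -
  have "(b * y * a - a * y * b) * c = b * y * (a * c) - a * c * (y * b)"
    by (simp add: left_diff_distrib mult.assoc ring_center_commute[OF c, of "y * b"])
  also have "\<dots> = (\<Sum>i\<in>I. b * y * (r i * f i) - r i * f i * (y * b))"
    by (simp add: comb sum_distrib_left sum_distrib_right sum_subtractf)
  also have "\<dots> = (\<Sum>i\<in>I. (b * y * r i - r i * y * b) * f i)"
  proof (rule sum.cong)
    fix i
    have "f i * (y * b) = y * b * f i"
      using f ring_center_commute by blast
    then show "b * y * (r i * f i) - r i * f i * (y * b) = (b * y * r i - r i * y * b) * f i"
      by (simp add: left_diff_distrib mult.assoc)
  qed simp
  finally show ?thesis .
qed

locale maximal_subring_of_division_ring =
  fixes R :: "'a::division_ring set"
  assumes maximal: "maximal_subring R UNIV"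
begin

lemma subring: "is_subring R UNIV"
  using maximal by (simp add: maximal_subring_def)

lemma proper: "R \<noteq> UNIV"
  using maximal by (simp add: maximal_subring_def)

lemma extension_eq_UNIV: "is_subring X UNIV \<Longrightarrow> R \<subseteq> X \<Longrightarrow> z \<in> X \<Longrightarrow> z \<notin> R \<Longrightarrow> X = UNIV"
  using maximal unfolding maximal_subring_def by blast

lemma sum_powers_representation:
  assumes "g \<in> ring_center" "g \<notin> R"
  obtains n r where "\<forall>i. r i \<in> R" "x = (\<Sum>i<n. r i * g ^ i)"
proof -
  have "ring_adjoin R g = UNIV"
    using assms by (intro extension_eq_UNIV[OF is_subring_ring_adjoin[OF subring]
          subset_ring_adjoin[OF subring] mem_ring_adjoin_self[OF subring]])
  then have "x \<in> ring_adjoin R g"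
    by simp
  then show thesis
    using that by (auto elim: ring_adjoinE)
qed

lemma central_if_commutes_with_R:
  assumes t: "t \<in> ring_center" "t \<notin> R" and x: "\<forall>r\<in>R. x * r = r * x"
  shows "x \<in> ring_center"
proof -
  have "R \<subseteq> {d. d * x = x * d}" "t \<in> {d. d * x = x * d}"
    using x ring_center_commute[OF t(1)] by auto
  then have "{d. d * x = x * d} = UNIV"
    using extension_eq_UNIV[OF is_subring_commutant] t(2) by blast
  then have "y * x = x * y" for y
    by (simp add: set_eq_iff)
  then show ?thesis
    by (simp add: ring_center_def)
qed

lemma central_eq_mult_power:
  assumes u: "u \<in> ring_center" "u \<notin> R" "inverse u \<in> R" and c: "c \<in> ring_center"
  obtains r n where "r \<in> R \<inter> ring_center" "c = r * u ^ n"
proof -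
  have u0: "u \<noteq> 0"
    using u(2) subring_zero[OF subring] by auto
  obtain n r where r: "\<forall>i. r i \<in> R" "c = (\<Sum>i<n. r i * u ^ i)"
    using sum_powers_representation[OF u(1,2)] by blast
  have pow: "u ^ i = inverse u ^ (n - i) * u ^ n" if "i < n" for i
  proof -
    have "u ^ n = u ^ (n - i) * u ^ i"
      using that by (simp flip: power_add)
    then show ?thesis
      using u0 by (simp add: power_inverse mult.assoc[symmetric])
  qed
  define s where "s = (\<Sum>i<n. r i * inverse u ^ (n - i))"
  have c_eq: "c = s * u ^ n"
    unfolding s_def r(2) sum_distrib_right by (intro sum.cong) (simp_all add: pow mult.assoc)
  moreover have "s \<in> R"
    unfolding s_def using r(1) u(3)
    by (intro subring_sum[OF subring] subring_mult[OF subring] subring_power[OF subring]) auto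
  moreover have "s \<in> ring_center"
  proof -
    have "s = c * inverse u ^ n"
      using u0 by (simp add: c_eq power_inverse mult.assoc)
    then show ?thesis
      using c u(1) by (simp add: subring_mult[OF is_subring_ring_center]
          subring_power[OF is_subring_ring_center] inverse_mem_ring_center)
  qed
  ultimately show ?thesis
    using that by blast
qed

lemma inverse_integral:
  assumes u: "u \<in> ring_center" "u \<notin> R"
  obtains m q where "0 < m" "\<forall>j. q j \<in> R" "inverse u ^ m = (\<Sum>j<m. q j * inverse u ^ j)"
proof -
  have u0: "u \<noteq> 0"
    using u(2) subring_zero[OF subring] by auto
  obtain n r where r: "\<forall>i. r i \<in> R" "inverse u = (\<Sum>i<n. r i * u ^ i)"
    using sum_powers_representation[OF u] by blast
  obtain k where n: "n = Suc k"
    using r(2) u0 by (cases n) auto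
  have pow: "u ^ i * inverse u ^ k = inverse u ^ (k - i)" if "i \<le> k" for i
  proof -
    have "inverse u ^ k = inverse u ^ i * inverse u ^ (k - i)"
      using that by (simp flip: power_add)
    then show ?thesis
      using u0 by (simp add: power_inverse mult.assoc[symmetric])
  qed
  have "inverse u ^ n = inverse u * inverse u ^ k"
    by (simp add: n)
  also have "\<dots> = (\<Sum>i<n. r i * u ^ i) * inverse u ^ k"
    using r(2) by (rule arg_cong[where f = "\<lambda>z. z * inverse u ^ k"])
  also have "\<dots> = (\<Sum>i<n. r (k - (k - i)) * inverse u ^ (k - i))"
    unfolding sum_distrib_right by (intro sum.cong) (simp_all add: n pow mult.assoc)
  also have "\<dots> = (\<Sum>j<n. r (k - j) * inverse u ^ j)"
    using sum.nat_diff_reindex[of "\<lambda>j. r (k - j) * inverse u ^ j" n] by (simp add: n)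
  finally show ?thesis
    using that[of n "\<lambda>j. r (k - j)"] r(1) n by blast
qed

lemma central_mem_if_mult_mem:
  assumes no_inverse: "\<And>v. v \<in> ring_center \<Longrightarrow> v \<notin> R \<Longrightarrow> inverse v \<notin> R"
    and a: "a \<in> R" "a \<noteq> 0" and g: "g \<in> ring_center" and ag: "a * g \<in> R"
  shows "g \<in> R"
proof (rule ccontr)
  assume gR: "g \<notin> R"
  obtain m q where m: "0 < m" "\<forall>j. q j \<in> R" "g ^ m = (\<Sum>j<m. q j * g ^ j)"
    using inverse_integral[OF inverse_mem_ring_center[OF g] no_inverse[OF g gR]]
    unfolding inverse_inverse_eq .
  define Q where "Q = {b \<in> R. \<forall>j<m. b * g ^ j \<in> R}"
  note multipliers = integral_element_multipliers[OF subring g m, folded Q_def]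
  have multipliers_UNIV: "{x. \<forall>b\<in>Q. b * x \<in> Q} = UNIV"
    using extension_eq_UNIV[OF multipliers] gR by blast
  have "a ^ m * g ^ j \<in> R" if "j < m" for j
  proof -
    have "a ^ m = a ^ (m - j) * a ^ j"
      using that by (simp flip: power_add)
    then have "a ^ m * g ^ j = a ^ (m - j) * (a * g) ^ j"
      by (simp add: power_mult_central[OF g] mult.assoc)
    then show ?thesis
      using a(1) ag by (simp add: subring_mult[OF subring] subring_power[OF subring])
  qed
  then have am: "a ^ m \<in> Q"
    unfolding Q_def using a(1) subring_power[OF subring] by blast
  have "y \<in> R" for y
  proof -
    have "a ^ m * (inverse (a ^ m) * y) \<in> Q"
      using am multipliers_UNIV by blast
    then show ?thesis
      using a(2) by (simp add: Q_def mult.assoc[symmetric])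
  qed
  then show False
    using proper by blast
qed

lemma inverse_mult_mem_if_commuting:
  assumes no_inverse: "\<And>v. v \<in> ring_center \<Longrightarrow> v \<notin> R \<Longrightarrow> inverse v \<notin> R"
    and t: "t \<in> ring_center" "t \<notin> R"
    and a: "a \<in> R" "a \<noteq> 0" and b: "b \<in> R" and comm: "\<forall>y\<in>R. b * y * a = a * y * b"
  shows "inverse a * b \<in> R \<inter> ring_center"
proof -
  define g where "g = inverse a * b"
  have ag: "a * g = b"
    using a(2) by (simp add: g_def mult.assoc[symmetric])
  have "b * 1 * a = a * 1 * b"
    using comm subring_one[OF subring] by blast
  then have "a * (g * a) = a * (a * g)"
    by (simp add: ag[symmetric] mult.assoc)
  then have ga: "g * a = a * g"
    using a(2) by simp
  have "g * y = y * g" if "y \<in> R" for y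
  proof -
    have "a * (g * y * a) = b * y * a"
      by (simp add: ag[symmetric] mult.assoc)
    also have "\<dots> = a * y * b"
      using comm that by blast
    also have "\<dots> = a * (y * g * a)"
      by (simp add: ag[symmetric] ga mult.assoc)
    finally have "g * y * a = y * g * a"
      using a(2) by simp
    then show ?thesis
      using a(2) by simp
  qed
  then have "g \<in> ring_center"
    using central_if_commutes_with_R[OF t] by blast
  moreover have "g \<in> R"
    using central_mem_if_mult_mem[OF no_inverse a calculation] ag b by simp
  ultimately show ?thesis
    by (simp add: g_def)
qed

text \<open>Induction on n: if b = r n satisfies b y a \<noteq> a y b for some y in R, the
  combination b y a - a y b has no n-th term; otherwise b = a g with g central and in R.\<close>

lemma central_coefficients:
  fixes n :: nat and a c :: 'a and r f :: "nat \<Rightarrow> 'a"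
  assumes no_inverse: "\<And>v. v \<in> ring_center \<Longrightarrow> v \<notin> R \<Longrightarrow> inverse v \<notin> R"
    and t: "t \<in> ring_center" "t \<notin> R"
  shows "a \<in> R \<Longrightarrow> a \<noteq> 0 \<Longrightarrow> c \<in> ring_center \<Longrightarrow> \<forall>i. r i \<in> R \<Longrightarrow> \<forall>i. f i \<in> ring_center \<Longrightarrow>
    a * c = (\<Sum>i<n. r i * f i) \<Longrightarrow> \<exists>s. (\<forall>i. s i \<in> R \<inter> ring_center) \<and> c = (\<Sum>i<n. s i * f i)"
proof (induction n arbitrary: a c r)
  case 0
  then show ?case
    using subring_zero[OF subring] subring_zero[OF is_subring_ring_center] by auto
next
  case (Suc n)
  have sum_upd: "(\<Sum>i<Suc n. (s(n := x)) i * f i) = (\<Sum>i<n. s i * f i) + x * f n" for s x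
  proof -
    have "(\<Sum>i<n. (s(n := x)) i * f i) = (\<Sum>i<n. s i * f i)"
      by (rule sum.cong) simp_all
    then show ?thesis
      by simp
  qed
  show ?case
  proof (cases "\<forall>y\<in>R. r n * y * a = a * y * r n")
    case True
    define g where "g = inverse a * r n"
    have g: "g \<in> R \<inter> ring_center"
      unfolding g_def
      using inverse_mult_mem_if_commuting[OF no_inverse t Suc.prems(1,2) _ True] Suc.prems(4)
      by blast
    have "a * (c - g * f n) = (\<Sum>i<n. r i * f i)"
      using Suc.prems(2,6) by (simp add: g_def right_diff_distrib mult.assoc[symmetric])
    moreover have "c - g * f n \<in> ring_center"
      using g Suc.prems(3,5)
      by (intro subring_diff[OF is_subring_ring_center] subring_mult[OF is_subring_ring_center])
        auto
    ultimately obtain s where s: "\<forall>i. s i \<in> R \<inter> ring_center" "c - g * f n = (\<Sum>i<n. s i * f i)"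
      using Suc.IH Suc.prems by blast
    have "c = (\<Sum>i<Suc n. (s(n := g)) i * f i)"
      by (simp add: sum_upd s(2)[symmetric])
    then show ?thesis
      using s(1) g by (intro exI[of _ "s(n := g)"]) auto
  next
    case False
    then obtain y where y: "y \<in> R" "r n * y * a - a * y * r n \<noteq> 0"
      by auto
    define a' where "a' = r n * y * a - a * y * r n"
    define r' where "r' i = r n * y * r i - r i * y * r n" for i
    have "a' * c = (\<Sum>i<Suc n. r' i * f i)"
      unfolding a'_def r'_def using Suc.prems(3,5,6) by (rule commutator_central_combination)
    then have "a' * c = (\<Sum>i<n. r' i * f i)"
      by (simp add: r'_def)
    moreover have "a' \<in> R" "\<forall>i. r' i \<in> R"
      using Suc.prems(1,4) y(1) unfolding a'_def r'_def
      by (auto intro!: subring_diff[OF subring] subring_mult[OF subring])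
    ultimately obtain s where s: "\<forall>i. s i \<in> R \<inter> ring_center" "c = (\<Sum>i<n. s i * f i)"
      using Suc.IH[of a' c r'] Suc.prems(3,5) y(2) unfolding a'_def by blast
    have "c = (\<Sum>i<Suc n. (s(n := 0)) i * f i)"
      by (simp add: sum_upd s(2))
    then show ?thesis
      using s(1) subring_zero[OF subring] subring_zero[OF is_subring_ring_center]
      by (intro exI[of _ "s(n := 0)"]) auto
  qed
qed

lemma center_subset_if_inverse_mem:
  assumes u: "u \<in> ring_center" "u \<notin> R" "inverse u \<in> R"
    and W: "is_subring W T" "R \<inter> ring_center \<subseteq> W" "u \<in> W"
  shows "ring_center \<subseteq> W"
proof
  fix c :: 'a assume "c \<in> ring_center"
  then obtain r n where "r \<in> R \<inter> ring_center" "c = r * u ^ n"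
    using central_eq_mult_power[OF u] by blast
  then show "c \<in> W"
    using W(2) subring_mult[OF W(1)] subring_power[OF W(1) W(3)] by blast
qed

lemma center_subset_if_no_inverse:
  assumes no_inverse: "\<And>v. v \<in> ring_center \<Longrightarrow> v \<notin> R \<Longrightarrow> inverse v \<notin> R"
    and t: "t \<in> ring_center" "t \<notin> R"
    and W: "is_subring W T" "R \<inter> ring_center \<subseteq> W" "t \<in> W"
  shows "ring_center \<subseteq> W"
proof
  fix c :: 'a assume c: "c \<in> ring_center"
  obtain n r where r: "\<forall>i. r i \<in> R" "c = (\<Sum>i<n. r i * t ^ i)"
    by (rule sum_powers_representation[OF t])
  have "\<forall>i. t ^ i \<in> ring_center"
    using subring_power[OF is_subring_ring_center t(1)] by blast
  then have "\<exists>s. (\<forall>i. s i \<in> R \<inter> ring_center) \<and> c = (\<Sum>i<n. s i * t ^ i)"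
    using central_coefficients[OF no_inverse t, where a = 1 and f = "\<lambda>i. t ^ i"]
      subring_one[OF subring] c r by simp
  then obtain s where s: "\<forall>i. s i \<in> R \<inter> ring_center" "c = (\<Sum>i<n. s i * t ^ i)"
    by blast
  have "s i * t ^ i \<in> W" for i
    using s(1) W(2) subring_mult[OF W(1)] subring_power[OF W(1) W(3)] by blast
  then show "c \<in> W"
    unfolding s(2) by (rule subring_sum[OF W(1)])
qed

lemma ring_center_has_maximal_subring:
  assumes t: "t \<in> ring_center" "t \<notin> R"
  shows "\<exists>M. maximal_subring M (ring_center :: 'a set)"
proof -
  have "\<exists>u\<in>ring_center. u \<notin> R \<and>
      (\<forall>W. is_subring W ring_center \<longrightarrow> R \<inter> ring_center \<subseteq> W \<longrightarrow> u \<in> W \<longrightarrow> ring_center \<subseteq> W)"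
  proof (cases "\<exists>u\<in>ring_center. u \<notin> R \<and> inverse u \<in> R")
    case True
    then obtain u where u: "u \<in> ring_center" "u \<notin> R" "inverse u \<in> R"
      by blast
    then show ?thesis
      using center_subset_if_inverse_mem[OF u] by blast
  next
    case False
    then have "\<And>v. v \<in> ring_center \<Longrightarrow> v \<notin> R \<Longrightarrow> inverse v \<notin> R"
      by blast
    then show ?thesis
      using center_subset_if_no_inverse[OF _ t] t by blast
  qed
  then obtain u where u: "u \<in> ring_center" "u \<notin> R"
    and generates: "\<And>W. is_subring W ring_center \<Longrightarrow> R \<inter> ring_center \<subseteq> W \<Longrightarrow> u \<in> W \<Longrightarrow> ring_center \<subseteq> W"
    by blast
  show ?thesis
  proof (rule maximal_subring_exists[OF is_subring_Int[OF subring is_subring_ring_center]])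
    show "u \<in> ring_center" "u \<notin> R \<inter> ring_center"
      using u by auto
    show "W = ring_center" if "is_subring W ring_center" "R \<inter> ring_center \<subseteq> W" "u \<in> W" for W
      using subring_subset[OF that(1)] generates[OF that] by (rule equalityI)
  qed
qed

end

theorem corollary2p8:
  fixes R :: "'a::division_ring set"
  assumes "\<not> (\<exists>S. maximal_subring S (ring_center :: 'a set))"
    and "\<exists>x y :: 'a. x * y \<noteq> y * x"
    and "maximal_subring R (UNIV :: 'a set)"
  shows "(ring_center :: 'a set) \<subseteq> R"
proof (rule ccontr)
  interpret maximal_subring_of_division_ring R
    using assms(3) by unfold_locales
  assume "\<not> ring_center \<subseteq> R"
  then obtain t where t: "t \<in> ring_center" "t \<notin> R"
    by blast
  then have "\<exists>M. maximal_subring M (ring_center :: 'a set)"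
    by (rule ring_center_has_maximal_subring)
  then show False
    using assms(1) by blast
qed

end
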